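(* Let $I\subsetneq S$ be a monomial ideal. If $I$ is $k$-clean for some integer $k\ge 0$, then $S/I$ is clean. Conversely, if $S/I$ is clean, then $I$ is $k$-clean for some integer $k\geq 0$.
   Context: $S=K[x_1,\dots,x_n]$ is a polynomial ring over a field $K$. For a monomial $u=x_1^{a_1}\cdots x_n^{a_n}$, $\mathrm{supp}(u)=\{i: a_i>0\}$. For an ideal $I$, $\min(I)$ denotes the set of prime ideals of $S$ that are minimal among primes containing $I$. A monomial $u\neq 1$ with $u\notin I$ is a cleaner monomial of the monomial ideal $I$ if $\min(I+Su)\subseteq \min(I)$. For an integer $k\ge 0$, the class of $k$-clean monomial ideals is defined recursively (as the smallest class closed under the following rule): a proper monomial ideal $I$ is $k$-clean if either $I$ is a prime ideal, or $I$ has no embedded prime ideals (i.e. $\mathrm{Ass}(S/I)=\min(I)$) and there exists a cleaner monomial $u$ of $I$ with $|\mathrm{supp}(u)|\le k+1$ such that both $I:u$ and $I+Su$ are $k$-clean. $S/I$ is clean if there is a chain of $\mathbb{Z}^n$-graded submodules $0=M_0\subset M_1\subset\cdots\subset M_r=S/I$ with multigraded isomorphisms $M_i/M_{i-1}\cong (S/P_i)(-\mathbf{a}_i)$ for some $\mathbf a_i\in\mathbb Z^n$ and monomial prime ideals $P_i$, such that $\{P_1,\dots,P_r\}\subseteq \min(I)$. *)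

theory Defs
  imports Main "HOL-Library.Poly_Mapping"
begin

text \<open>The polynomial ring S = K[x_j : j in 'n] over a field K, with a finite index
type 'n of cardinality n. A polynomial is a finitely supported map from exponent
vectors (monomials) to coefficients.\<close>

type_synonym ('n, 'k) S = "('n \<Rightarrow>\<^sub>0 nat) \<Rightarrow>\<^sub>0 'k"

definition monom :: "('n \<Rightarrow>\<^sub>0 nat) \<Rightarrow> ('n, 'k::field) S" where
  "monom a = Poly_Mapping.single a 1"

definition is_monomial :: "('n, 'k::field) S \<Rightarrow> bool" where
  "is_monomial u \<longleftrightarrow> (\<exists>a. u = monom a)"

definition supp :: "('n \<Rightarrow>\<^sub>0 nat) \<Rightarrow> 'n set" where
  "supp a = Poly_Mapping.keys a"

definition is_ideal :: "'r::comm_ring_1 set \<Rightarrow> bool" where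
  "is_ideal I \<longleftrightarrow> 0 \<in> I \<and> (\<forall>a\<in>I. \<forall>b\<in>I. a + b \<in> I) \<and> (\<forall>s. \<forall>a\<in>I. s * a \<in> I)"

definition ideal_span :: "'r::comm_ring_1 set \<Rightarrow> 'r set" where
  "ideal_span G = \<Inter>{J. is_ideal J \<and> G \<subseteq> J}"

definition prime_ideal :: "'r::comm_ring_1 set \<Rightarrow> bool" where
  "prime_ideal P \<longleftrightarrow> is_ideal P \<and> P \<noteq> UNIV \<and> (\<forall>a b. a * b \<in> P \<longrightarrow> a \<in> P \<or> b \<in> P)"

definition minprimes :: "'r::comm_ring_1 set \<Rightarrow> 'r set set" where
  "minprimes I = {P. prime_ideal P \<and> I \<subseteq> P \<and>
       (\<forall>Q. prime_ideal Q \<and> I \<subseteq> Q \<and> Q \<subseteq> P \<longrightarrow> Q = P)}"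

text \<open>Ideal quotient I : f  (= annihilator of the class of f in S/I).\<close>
definition colon :: "'r::comm_ring_1 set \<Rightarrow> 'r \<Rightarrow> 'r set" where
  "colon I f = {g. g * f \<in> I}"

text \<open>Ass(S/I): prime ideals that are annihilators of elements of S/I.\<close>
definition Ass :: "'r::comm_ring_1 set \<Rightarrow> 'r set set" where
  "Ass I = {P. prime_ideal P \<and> (\<exists>f. P = colon I f)}"

definition add_principal :: "'r::comm_ring_1 set \<Rightarrow> 'r \<Rightarrow> 'r set" where
  "add_principal I u = {a + s * u | a s. a \<in> I}"

definition monomial_ideal :: "('n, 'k::field) S set \<Rightarrow> bool" where
  "monomial_ideal I \<longleftrightarrow> (\<exists>G. (\<forall>g\<in>G. is_monomial g) \<and> I = ideal_span G)"

definition cleaner_monomial :: "('n, 'k::field) S set \<Rightarrow> ('n \<Rightarrow>\<^sub>0 nat) \<Rightarrow> bool" where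
  "cleaner_monomial I a \<longleftrightarrow> a \<noteq> 0 \<and> monom a \<notin> I \<and>
     minprimes (add_principal I (monom a)) \<subseteq> minprimes I"

inductive kclean :: "nat \<Rightarrow> ('n, 'k::field) S set \<Rightarrow> bool" for k :: nat where
  prime: "monomial_ideal I \<Longrightarrow> I \<noteq> UNIV \<Longrightarrow> prime_ideal I \<Longrightarrow> kclean k I"
| step: "monomial_ideal I \<Longrightarrow> I \<noteq> UNIV \<Longrightarrow> Ass I = minprimes I \<Longrightarrow>
         cleaner_monomial I a \<Longrightarrow> card (supp a) \<le> k + 1 \<Longrightarrow>
         kclean k (colon I (monom a)) \<Longrightarrow> kclean k (add_principal I (monom a)) \<Longrightarrow>
         kclean k I"

text \<open>Z^n-grading: f is homogeneous of degree d (d in Z^n) if all its monomials have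
exponent vector d.  The homogeneous component of f of degree m is its term at m.\<close>
definition homog :: "('n \<Rightarrow> int) \<Rightarrow> ('n, 'k::field) S \<Rightarrow> bool" where
  "homog d f \<longleftrightarrow> (\<forall>m\<in>Poly_Mapping.keys f. (\<lambda>j. int (Poly_Mapping.lookup m j)) = d)"

definition graded :: "('n, 'k::field) S set \<Rightarrow> bool" where
  "graded N \<longleftrightarrow> (\<forall>f\<in>N. \<forall>m. Poly_Mapping.single m (Poly_Mapping.lookup f m) \<in> N)"

text \<open>phi (on representatives) induces a multigraded S-module isomorphism
(S/P)(-a) \<cong> N/N' (for ideals N' \<subseteq> N of S).\<close>
definition graded_iso ::
  "('n, 'k::field) S set \<Rightarrow> ('n \<Rightarrow> int) \<Rightarrow> ('n, 'k) S set \<Rightarrow> ('n, 'k) S set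
     \<Rightarrow> (('n, 'k) S \<Rightarrow> ('n, 'k) S) \<Rightarrow> bool" where
  "graded_iso P a N N' \<phi> \<longleftrightarrow>
     (\<forall>h. \<phi> h \<in> N) \<and>
     (\<forall>h1 h2. h1 - h2 \<in> P \<longleftrightarrow> \<phi> h1 - \<phi> h2 \<in> N') \<and>
     (\<forall>y\<in>N. \<exists>h. y - \<phi> h \<in> N') \<and>
     (\<forall>h1 h2. \<phi> (h1 + h2) - (\<phi> h1 + \<phi> h2) \<in> N') \<and>
     (\<forall>s h. \<phi> (s * h) - s * \<phi> h \<in> N') \<and>
     (\<forall>b h. homog b h \<longrightarrow> (\<exists>g. homog (\<lambda>j. b j + a j) g \<and> \<phi> h - g \<in> N'))"

definition monomial_prime :: "('n, 'k::field) S set \<Rightarrow> bool" where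
  "monomial_prime P \<longleftrightarrow> prime_ideal P \<and> monomial_ideal P"

text \<open>S/I is clean.  Z^n-graded submodules M_i of S/I are written M_i = N_i/I with
N_i a graded ideal containing I; M_{i+1}/M_i = N_{i+1}/N_i.\<close>
definition clean_quot :: "('n, 'k::field) S set \<Rightarrow> bool" where
  "clean_quot I \<longleftrightarrow> (\<exists>(r::nat) N P a.
      N 0 = I \<and> N r = UNIV \<and>
      (\<forall>i\<le>r. is_ideal (N i) \<and> graded (N i)) \<and>
      (\<forall>i<r. N i \<subset> N (Suc i)) \<and>
      (\<forall>i<r. monomial_prime (P i) \<and> P i \<in> minprimes I \<and>
              (\<exists>\<phi>. graded_iso (P i) (a i) (N (Suc i)) (N i) \<phi>)))"

end

theory Submission
  imports Defs
begin

text \<open>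
In a chain of ideals \<open>I = N\<^sub>0 \<subset> \<dots> \<subset> N\<^sub>r = S\<close> with multigraded factors
\<open>N\<^sub>i\<^sub>+\<^sub>1/N\<^sub>i \<cong> (S/P\<^sub>i)(-a\<^sub>i)\<close>, every step is \<open>N\<^sub>i\<^sub>+\<^sub>1 = N\<^sub>i + S u\<^sub>i\<close> for a monomial \<open>u\<^sub>i\<close>
with \<open>N\<^sub>i : u\<^sub>i = P\<^sub>i\<close>: the image of \<open>1\<close> generates the cyclic factor, and homogeneity forces
it to be a monomial up to a unit.

If \<open>I\<close> is \<open>k\<close>-clean via a cleaner monomial \<open>u\<close>, clean filtrations of \<open>I : u\<close> and of
\<open>I + S u\<close> splice together: \<open>J \<mapsto> I + u J\<close> carries a filtration of \<open>S/(I : u)\<close> onto one of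
\<open>(I + S u)/I\<close>, shifting degrees by \<open>u\<close>. The primes of \<open>S/(I : u)\<close> are associated primes of
\<open>I\<close>, hence minimal as \<open>I\<close> has no embedded primes, and those of \<open>I + S u\<close> are minimal
because \<open>u\<close> is a cleaner monomial.

Conversely, in a filtration all of whose primes are minimal over \<open>I\<close>, every minimal prime
occurs among the \<open>P\<^sub>i\<close> and every associated prime lies in some \<open>P\<^sub>i\<close>, so \<open>Ass(S/I) = min(I)\<close>;
the first monomial \<open>u\<^sub>0\<close> is then a cleaner monomial with \<open>I : u\<^sub>0 = P\<^sub>0\<close> prime, and induction on
the length of the filtration shows that \<open>I\<close> is \<open>n\<close>-clean.
\<close>

section \<open>Ideals of a commutative ring\<close>

lemma ideal_zero: "is_ideal I \<Longrightarrow> 0 \<in> I"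
  by (simp add: is_ideal_def)

lemma ideal_add: "is_ideal I \<Longrightarrow> a \<in> I \<Longrightarrow> b \<in> I \<Longrightarrow> a + b \<in> I"
  by (simp add: is_ideal_def)

lemma ideal_mult_left: "is_ideal I \<Longrightarrow> a \<in> I \<Longrightarrow> s * a \<in> I"
  by (simp add: is_ideal_def)

lemma ideal_mult_right: "is_ideal I \<Longrightarrow> a \<in> I \<Longrightarrow> a * s \<in> I"
  by (metis ideal_mult_left mult.commute)

lemma ideal_uminus: "is_ideal I \<Longrightarrow> a \<in> I \<Longrightarrow> - a \<in> I"
  by (metis ideal_mult_left mult_minus1)

lemma ideal_diff: "is_ideal I \<Longrightarrow> a \<in> I \<Longrightarrow> b \<in> I \<Longrightarrow> a - b \<in> I"
  by (metis ideal_add ideal_uminus diff_conv_add_uminus)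

lemma ideal_mem_iff_if_diff_mem: "is_ideal I \<Longrightarrow> a - b \<in> I \<Longrightarrow> a \<in> I \<longleftrightarrow> b \<in> I"
  by (metis ideal_add ideal_diff diff_add_cancel diff_diff_eq2 diff_self)

lemma ideal_eq_UNIV_if_one: "is_ideal I \<Longrightarrow> 1 \<in> I \<Longrightarrow> I = UNIV"
  by (metis UNIV_eq_I ideal_mult_left mult.right_neutral)

lemma is_ideal_UNIV: "is_ideal UNIV"
  by (simp add: is_ideal_def)

lemma prime_ideal_is_ideal: "prime_ideal P \<Longrightarrow> is_ideal P"
  by (simp add: prime_ideal_def)

lemma prime_ideal_one_notin: "prime_ideal P \<Longrightarrow> 1 \<notin> P"
  using ideal_eq_UNIV_if_one prime_ideal_def by blast

lemma prime_ideal_mult: "prime_ideal P \<Longrightarrow> a * b \<in> P \<Longrightarrow> a \<in> P \<or> b \<in> P"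
  by (simp add: prime_ideal_def)

lemma prime_ideal_power: "prime_ideal P \<Longrightarrow> s ^ n \<in> P \<Longrightarrow> s \<in> P"
  by (induction n) (auto dest: prime_ideal_one_notin prime_ideal_mult)

lemma prod_notin_prime_ideal:
  assumes "prime_ideal Q" "finite A" "\<forall>i\<in>A. f i \<notin> Q"
  shows "prod f A \<notin> Q"
  using assms(2,3)
proof (induction A rule: finite_induct)
  case empty
  then show ?case using prime_ideal_one_notin[OF assms(1)] by simp
next
  case (insert x F)
  then show ?case using prime_ideal_mult[OF assms(1), of "f x" "prod f F"] by auto
qed

lemma prod_mem_ideal:
  assumes "is_ideal P" "finite A" "i \<in> A" "f i \<in> P"
  shows "prod f A \<in> P"
proof -
  have "prod f A = f i * prod f (A - {i})"
    using assms by (simp add: prod.remove)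
  then show ?thesis using assms ideal_mult_right by metis
qed

lemma common_element_notin_prime:
  fixes j :: nat
  assumes "prime_ideal Q" and "\<forall>i<j. is_ideal (P i) \<and> \<not> P i \<subseteq> Q"
  shows "\<exists>s. s \<notin> Q \<and> (\<forall>i<j. s \<in> P i)"
proof -
  have "\<forall>i. \<exists>x. i < j \<longrightarrow> x \<in> P i \<and> x \<notin> Q"
    using assms(2) by blast
  then obtain f where f: "\<forall>i<j. f i \<in> P i \<and> f i \<notin> Q"
    by (metis choice)
  have "prod f {..<j} \<notin> Q"
    using f by (intro prod_notin_prime_ideal[OF assms(1)]) auto
  moreover have "prod f {..<j} \<in> P i" if "i < j" for i
    using f assms(2) that by (intro prod_mem_ideal[of _ _ i]) auto
  ultimately show ?thesis by blast
qed

lemma is_ideal_add_principal: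
  assumes I: "is_ideal I" shows "is_ideal (add_principal I u)"
  unfolding is_ideal_def add_principal_def
proof (intro conjI ballI allI)
  show "0 \<in> {a + s * u |a s. a \<in> I}"
    using ideal_zero[OF I] by (intro CollectI exI[of _ 0] exI[of _ 0]) simp
  fix x y assume "x \<in> {a + s * u |a s. a \<in> I}" "y \<in> {a + s * u |a s. a \<in> I}"
  then obtain a s b t where "x = a + s * u" "y = b + t * u" "a \<in> I" "b \<in> I" by blast
  then show "x + y \<in> {a + s * u |a s. a \<in> I}"
    using ideal_add[OF I] by (intro CollectI exI[of _ "a + b"] exI[of _ "s + t"]) (simp add: algebra_simps)
next
  fix c x assume "x \<in> {a + s * u |a s. a \<in> I}"
  then obtain a s where "x = a + s * u" "a \<in> I" by blast
  then show "c * x \<in> {a + s * u |a s. a \<in> I}"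
    using ideal_mult_left[OF I] by (intro CollectI exI[of _ "c * a"] exI[of _ "c * s"]) (simp add: algebra_simps)
qed

lemma subset_add_principal: "I \<subseteq> add_principal I u"
proof
  fix x assume "x \<in> I"
  then show "x \<in> add_principal I u"
    unfolding add_principal_def by (intro CollectI exI[of _ x] exI[of _ 0]) simp
qed

lemma self_mem_add_principal: "is_ideal I \<Longrightarrow> u \<in> add_principal I u"
  unfolding add_principal_def by (intro CollectI exI[of _ 0] exI[of _ 1]) (simp add: ideal_zero)

lemma add_principal_least: "is_ideal J \<Longrightarrow> I \<subseteq> J \<Longrightarrow> u \<in> J \<Longrightarrow> add_principal I u \<subseteq> J"
  unfolding add_principal_def using ideal_add ideal_mult_left by blast

lemma add_principal_cong:
  assumes "is_ideal J" "v - w \<in> J"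
  shows "add_principal J v = add_principal J w"
proof -
  have "add_principal J v \<subseteq> add_principal J w" if "v - w \<in> J" for v w
  proof
    fix y assume "y \<in> add_principal J v"
    then obtain a s where "y = (a + s * (v - w)) + s * w" "a \<in> J"
      unfolding add_principal_def by (auto simp: algebra_simps)
    moreover have "a + s * (v - w) \<in> J"
      using assms(1) that \<open>a \<in> J\<close> ideal_add ideal_mult_left by blast
    ultimately show "y \<in> add_principal J w" unfolding add_principal_def by blast
  qed
  moreover have "w - v \<in> J" using assms ideal_uminus by fastforce
  ultimately show ?thesis using assms by blast
qed

lemma add_principal_mult_unit:
  assumes "e * e' = 1"
  shows "add_principal J (e * w) = add_principal J w"
proof
  show "add_principal J (e * w) \<subseteq> add_principal J w"
  proof
    fix y assume "y \<in> add_principal J (e * w)"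
    then obtain a s where "y = a + (s * e) * w" "a \<in> J"
      unfolding add_principal_def by (auto simp: mult.assoc)
    then show "y \<in> add_principal J w" unfolding add_principal_def by blast
  qed
  show "add_principal J w \<subseteq> add_principal J (e * w)"
  proof
    fix y assume "y \<in> add_principal J w"
    then obtain a s where y: "y = a + s * w" "a \<in> J"
      unfolding add_principal_def by blast
    have "s * w = (s * e') * (e * w)"
      using assms by (simp add: algebra_simps) (metis mult.assoc mult.commute mult.right_neutral)
    then show "y \<in> add_principal J (e * w)"
      unfolding add_principal_def using y by (intro CollectI exI[of _ a] exI[of _ "s * e'"]) simp
  qed
qed

lemma subset_colon: "is_ideal I \<Longrightarrow> I \<subseteq> colon I u"
  unfolding colon_def using ideal_mult_right by blast

lemma colon_colon: "colon (colon I u) f = colon I (f * u)"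
  unfolding colon_def by (simp add: mult.assoc)

lemma colon_cong:
  assumes "is_ideal J" "v - w \<in> J"
  shows "colon J v = colon J w"
proof -
  have "g * v - g * w \<in> J" for g
    using ideal_mult_left[OF assms, of g] by (simp add: right_diff_distrib)
  then show ?thesis
    unfolding colon_def using ideal_mem_iff_if_diff_mem[OF assms(1)] by blast
qed

lemma colon_mult_unit:
  assumes "is_ideal J" "e * e' = 1"
  shows "colon J (e * w) = colon J w"
proof -
  have "g * w = e' * (g * (e * w))" for g
    using assms(2) by (metis mult.assoc mult.commute mult.right_neutral)
  moreover have "g * (e * w) = e * (g * w)" for g
    by (simp add: algebra_simps)
  ultimately show ?thesis
    unfolding colon_def using assms(1) ideal_mult_left by (metis (no_types, lifting) Collect_cong)
qed

lemma notin_if_prime_colon: "prime_ideal (colon J u) \<Longrightarrow> u \<notin> J"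
  using prime_ideal_one_notin unfolding colon_def by fastforce

lemma colon_eq_if_add_principal_UNIV:
  assumes J: "is_ideal J" and "add_principal J u = UNIV"
  shows "colon J u = J"
proof
  obtain x s where xs: "1 = x + s * u" "x \<in> J"
    using assms(2) unfolding add_principal_def by blast
  show "colon J u \<subseteq> J"
  proof
    fix g assume "g \<in> colon J u"
    then have "g * x + s * (g * u) \<in> J"
      using xs(2) J ideal_add ideal_mult_left ideal_mult_right unfolding colon_def by blast
    moreover have "g = g * x + s * (g * u)"
    proof -
      have "g = g * (x + s * u)" using xs(1) by simp
      then show ?thesis by (simp add: algebra_simps)
    qed
    ultimately show "g \<in> J" by simp
  qed
qed (rule subset_colon[OF J])

lemma minprimes_prime: "Q \<in> minprimes I \<Longrightarrow> prime_ideal Q"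
  by (simp add: minprimes_def)

lemma minprimes_subset: "Q \<in> minprimes I \<Longrightarrow> I \<subseteq> Q"
  by (simp add: minprimes_def)

lemma minprimes_minimal: "Q \<in> minprimes I \<Longrightarrow> prime_ideal Q' \<Longrightarrow> I \<subseteq> Q' \<Longrightarrow> Q' \<subseteq> Q \<Longrightarrow> Q' = Q"
  by (simp add: minprimes_def)

lemma minprimes_of_intermediate: "Q \<in> minprimes I \<Longrightarrow> I \<subseteq> J \<Longrightarrow> J \<subseteq> Q \<Longrightarrow> Q \<in> minprimes J"
  unfolding minprimes_def by blast

lemma Ass_colon_subset: "Ass (colon I u) \<subseteq> Ass I"
  unfolding Ass_def colon_colon by blast

lemma is_ideal_ideal_span: "is_ideal (ideal_span G)"
  unfolding ideal_span_def is_ideal_def by auto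

lemma ideal_span_superset: "G \<subseteq> ideal_span G"
  unfolding ideal_span_def by blast

lemma ideal_span_least: "is_ideal J \<Longrightarrow> G \<subseteq> J \<Longrightarrow> ideal_span G \<subseteq> J"
  unfolding ideal_span_def by blast

lemma add_principal_ideal_span: "add_principal (ideal_span G) u = ideal_span (insert u G)"
proof
  have "ideal_span G \<subseteq> ideal_span (insert u G)"
    by (rule ideal_span_least[OF is_ideal_ideal_span]) (use ideal_span_superset in blast)
  then show "add_principal (ideal_span G) u \<subseteq> ideal_span (insert u G)"
    by (rule add_principal_least[OF is_ideal_ideal_span]) (use ideal_span_superset in blast)
  show "ideal_span (insert u G) \<subseteq> add_principal (ideal_span G) u"
    using is_ideal_add_principal self_mem_add_principal subset_add_principal
      is_ideal_ideal_span ideal_span_superset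
    by (intro ideal_span_least) blast+
qed

section \<open>Prime filtrations\<close>

definition prime_filtration :: "nat \<Rightarrow> (nat \<Rightarrow> 'r::comm_ring_1 set) \<Rightarrow> (nat \<Rightarrow> 'r set) \<Rightarrow> (nat \<Rightarrow> 'r) \<Rightarrow> bool" where
  "prime_filtration r N P U \<longleftrightarrow> (\<forall>i\<le>r. is_ideal (N i)) \<and> N r = UNIV \<and>
     (\<forall>i<r. prime_ideal (P i) \<and> N (Suc i) = add_principal (N i) (U i) \<and> colon (N i) (U i) = P i)"

lemma prime_filtrationD:
  assumes "prime_filtration r N P U" "i < r"
  shows "is_ideal (N i)" "prime_ideal (P i)" "N (Suc i) = add_principal (N i) (U i)"
    "colon (N i) (U i) = P i"
  using assms unfolding prime_filtration_def by auto

lemma prime_filtration_tail: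
  "prime_filtration (Suc r) N P U \<Longrightarrow>
     prime_filtration r (\<lambda>i. N (Suc i)) (\<lambda>i. P (Suc i)) (\<lambda>i. U (Suc i))"
  unfolding prime_filtration_def by (metis Suc_le_mono Suc_mono)

lemma prime_filtration_proper:
  assumes "prime_filtration r N P U" "i < r" shows "N i \<noteq> UNIV"
  using notin_if_prime_colon[of "N i" "U i"] prime_filtrationD(2,4)[OF assms] by auto

lemma subset_chain_mono:
  assumes "\<And>i. i < r \<Longrightarrow> N i \<subseteq> N (Suc i)" "i \<le> j" "j \<le> r"
  shows "N i \<subseteq> N j"
  using assms(2,3)
proof (induction j rule: dec_induct)
  case (step j)
  then show ?case using assms(1)[of j] by auto
qed simp

lemma prime_filtration_mono:
  "prime_filtration r N P U \<Longrightarrow> i \<le> j \<Longrightarrow> j \<le> r \<Longrightarrow> N i \<subseteq> N j"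
  by (rule subset_chain_mono) (auto simp: prime_filtrationD subset_add_principal)

lemma prime_filtration_subset_prime:
  assumes "prime_filtration r N P U" "i < r"
  shows "N 0 \<subseteq> P i"
  using prime_filtration_mono[OF assms(1), of 0 i] subset_colon[of "N i" "U i"] assms
  by (simp add: prime_filtrationD)

lemma prime_filtration_power_mult_mem:
  assumes F: "prime_filtration r N P U" and "j \<le> r" "\<forall>i<j. s \<in> P i" "y \<in> N j"
  shows "s ^ j * y \<in> N 0"
  using assms(2-4)
proof (induction j arbitrary: y)
  case (Suc j)
  then have j: "j < r" by simp
  note Nj = prime_filtrationD[OF F j]
  obtain x h where y: "y = x + h * U j" "x \<in> N j"
    using Suc.prems(3) Nj(3) unfolding add_principal_def by blast
  have "s * U j \<in> N j"
    using Suc.prems(2) Nj(4) unfolding colon_def by auto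
  then have "s * x + h * (s * U j) \<in> N j"
    using y(2) Nj(1) ideal_add ideal_mult_left by blast
  moreover have "s * y = s * x + h * (s * U j)"
    using y(1) by (simp add: algebra_simps)
  ultimately have "s ^ j * (s * y) \<in> N 0"
    using Suc by simp
  then show ?case by (simp add: mult.left_commute mult.assoc)
qed simp

lemma prime_filtration_avoid:
  assumes F: "prime_filtration r N P U" and Q: "Q \<in> minprimes (N 0)"
    and "j \<le> r" "\<forall>i<j. P i \<noteq> Q"
  shows "\<exists>s. s \<notin> Q \<and> (\<forall>i<j. s \<in> P i)"
proof (rule common_element_notin_prime[OF minprimes_prime[OF Q]], intro allI impI conjI)
  fix i assume "i < j"
  then have i: "i < r" "P i \<noteq> Q" using assms by auto
  show "is_ideal (P i)"
    using prime_filtrationD(2)[OF F i(1)] by (rule prime_ideal_is_ideal)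
  show "\<not> P i \<subseteq> Q"
    using minprimes_minimal[OF Q prime_filtrationD(2)[OF F i(1)] prime_filtration_subset_prime[OF F i(1)]] i(2)
    by blast
qed

lemma minprimes_in_prime_filtration:
  assumes F: "prime_filtration r N P U" and Q: "Q \<in> minprimes (N 0)"
  shows "\<exists>j<r. P j = Q"
proof (rule ccontr)
  assume "\<not> (\<exists>j<r. P j = Q)"
  then obtain s where s: "s \<notin> Q" "\<forall>i<r. s \<in> P i"
    using prime_filtration_avoid[OF F Q] by blast
  have "1 \<in> N r" using F by (simp add: prime_filtration_def)
  then have "s ^ r * 1 \<in> Q"
    using prime_filtration_power_mult_mem[OF F le_refl s(2)] minprimes_subset[OF Q] by blast
  then show False
    using prime_ideal_power[OF minprimes_prime[OF Q]] s(1) by simp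
qed

text \<open>For the first index \<open>j\<close> with \<open>P\<^sub>j = Q\<close>, an element \<open>s \<notin> Q\<close> killing the earlier factors
  moves the generator \<open>U\<^sub>j\<close> down to \<open>s\<^sup>j U\<^sub>j\<close>, whose annihilator modulo \<open>N\<^sub>0\<close> is \<open>Q\<close>.\<close>

lemma minprimes_subset_Ass_if_prime_filtration:
  assumes F: "prime_filtration r N P U"
  shows "minprimes (N 0) \<subseteq> Ass (N 0)"
proof
  fix Q assume Q: "Q \<in> minprimes (N 0)"
  obtain j where j: "j < r" "P j = Q" "\<forall>i<j. P i \<noteq> Q"
    using minprimes_in_prime_filtration[OF F Q] exists_least_iff[of "\<lambda>j. j < r \<and> P j = Q"]
    by (metis less_trans)
  obtain s where s: "s \<notin> Q" "\<forall>i<j. s \<in> P i"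
    using prime_filtration_avoid[OF F Q less_imp_le[OF j(1)] j(3)] by blast
  have PQ: "prime_ideal Q" using minprimes_prime[OF Q] .
  note Nj = prime_filtrationD[OF F j(1)]
  have "colon (N 0) (s ^ j * U j) = Q"
  proof (intro set_eqI iffI)
    fix g assume "g \<in> colon (N 0) (s ^ j * U j)"
    then have "(g * s ^ j) * U j \<in> N j"
      using prime_filtration_mono[OF F, of 0 j] j(1) unfolding colon_def by (auto simp: algebra_simps)
    then have "g * s ^ j \<in> Q" using Nj(4) j(2) unfolding colon_def by auto
    moreover have "s ^ j \<notin> Q" using s(1) prime_ideal_power[OF PQ] by blast
    ultimately show "g \<in> Q" using prime_ideal_mult[OF PQ] by blast
  next
    fix g assume "g \<in> Q"
    then have "g * U j \<in> N j" using Nj(4) j(2) unfolding colon_def by auto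
    then have "s ^ j * (g * U j) \<in> N 0"
      using prime_filtration_power_mult_mem[OF F _ s(2)] j(1) by auto
    then show "g \<in> colon (N 0) (s ^ j * U j)" unfolding colon_def by (simp add: algebra_simps)
  qed
  then show "Q \<in> Ass (N 0)" using PQ unfolding Ass_def by blast
qed

lemma Ass_subset_prime_of_prime_filtration:
  assumes F: "prime_filtration r N P U" and A: "Q \<in> Ass (N 0)"
  shows "\<exists>j<r. Q \<subseteq> P j"
proof -
  obtain f where Q: "prime_ideal Q" "Q = colon (N 0) f" using A unfolding Ass_def by blast
  have "f \<notin> N 0" using notin_if_prime_colon Q by blast
  moreover have "f \<in> N r" using F by (simp add: prime_filtration_def)
  ultimately obtain j where j: "j < r" "f \<in> N (Suc j)" "f \<notin> N j"
    using exists_least_iff[of "\<lambda>k. f \<in> N k"]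
    by (metis Suc_le_lessD le_refl less_le_trans not0_implies_Suc not_less)
  note Nj = prime_filtrationD[OF F j(1)]
  obtain x h where f: "f = x + h * U j" "x \<in> N j"
    using j(2) Nj(3) unfolding add_principal_def by blast
  have h: "h \<notin> P j"
  proof
    assume "h \<in> P j"
    then have "h * U j \<in> N j" using Nj(4) unfolding colon_def by auto
    then show False using f j(3) Nj(1) ideal_add by blast
  qed
  have "Q \<subseteq> P j"
  proof
    fix p assume "p \<in> Q"
    then have "p * f \<in> N j"
      using Q prime_filtration_mono[OF F, of 0 j] j(1) unfolding colon_def by auto
    moreover have "p * x \<in> N j" using f(2) Nj(1) ideal_mult_left by blast
    moreover have "(p * h) * U j = p * f - p * x" using f(1) by (simp add: algebra_simps)
    ultimately have "(p * h) * U j \<in> N j" using Nj(1) ideal_diff by metis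
    then have "p * h \<in> P j" using Nj(4) unfolding colon_def by auto
    then show "p \<in> P j" using h prime_ideal_mult[OF Nj(2)] by blast
  qed
  then show ?thesis using j(1) by blast
qed

lemma Ass_eq_minprimes_if_prime_filtration:
  assumes F: "prime_filtration r N P U" and min: "\<forall>i<r. P i \<in> minprimes (N 0)"
  shows "Ass (N 0) = minprimes (N 0)"
proof
  show "Ass (N 0) \<subseteq> minprimes (N 0)"
  proof
    fix Q assume Q: "Q \<in> Ass (N 0)"
    obtain j where j: "j < r" "Q \<subseteq> P j"
      using Ass_subset_prime_of_prime_filtration[OF F Q] by blast
    obtain f where Qf: "prime_ideal Q" "Q = colon (N 0) f" using Q unfolding Ass_def by blast
    have "is_ideal (N 0)" using F by (simp add: prime_filtration_def)
    then have "N 0 \<subseteq> Q" using Qf(2) subset_colon by blast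
    then show "Q \<in> minprimes (N 0)"
      using minprimes_minimal[OF _ Qf(1) _ j(2)] min j(1) by metis
  qed
qed (rule minprimes_subset_Ass_if_prime_filtration[OF F])

section \<open>Monomial ideals and the multigrading\<close>

lemma monomial_ideal_is_ideal: "monomial_ideal I \<Longrightarrow> is_ideal I"
  using is_ideal_ideal_span monomial_ideal_def by metis

lemma monomial_ideal_add_principal:
  assumes "monomial_ideal I" shows "monomial_ideal (add_principal I (monom a))"
proof -
  obtain G where G: "\<forall>g\<in>G. is_monomial g" "I = ideal_span G"
    using assms unfolding monomial_ideal_def by blast
  then have "\<forall>g\<in>insert (monom a) G. is_monomial g"
    by (auto simp: is_monomial_def)
  then show ?thesis
    unfolding monomial_ideal_def G(2) add_principal_ideal_span by blast
qed

lemma lookup_mult_monom: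
  fixes g :: "('n, 'k::field) S"
  shows "Poly_Mapping.lookup (g * monom a) m = (\<Sum>l. Poly_Mapping.lookup g l when m = l + a)"
proof -
  have inner: "(\<Sum>q. (1 when a = q) when m = l + q) = ((1::'k) when m = l + a)" for l
  proof -
    have eq: "(\<lambda>q. ((1::'k) when a = q) when m = l + q) = (\<lambda>q. (1 when m = l + a) when a = q)"
      by (auto simp: fun_eq_iff when_def)
    show ?thesis unfolding eq by simp
  qed
  have "Poly_Mapping.lookup (g * monom a) m =
      (\<Sum>l. Poly_Mapping.lookup g l * (\<Sum>q. (1 when a = q) when m = l + q))"
    by (simp add: monom_def lookup_mult lookup_single)
  also have "\<dots> = (\<Sum>l. Poly_Mapping.lookup g l when m = l + a)"
    by (simp only: inner mult_when mult.right_neutral)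
  finally show ?thesis .
qed

lemma lookup_mult_monom_add:
  fixes g :: "('n, 'k::field) S"
  shows "Poly_Mapping.lookup (g * monom a) (k + a) = Poly_Mapping.lookup g k"
proof -
  have eq: "(\<lambda>l. Poly_Mapping.lookup g l when k + a = l + a) = (\<lambda>l. Poly_Mapping.lookup g l when l = k)"
    by (auto simp: fun_eq_iff when_def)
  show ?thesis unfolding lookup_mult_monom eq by simp
qed

lemma lookup_mult_monom_eq_zero:
  fixes g :: "('n, 'k::field) S"
  assumes "\<forall>k. m \<noteq> k + a"
  shows "Poly_Mapping.lookup (g * monom a) m = 0"
proof -
  have eq: "(\<lambda>l. Poly_Mapping.lookup g l when m = l + a) = (\<lambda>l. 0)"
    using assms by (auto simp: fun_eq_iff when_def)
  show ?thesis unfolding lookup_mult_monom eq by simp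
qed

lemma keys_ideal_span_monomials:
  fixes G :: "('n, 'k::field) S set"
  assumes "\<forall>g\<in>G. is_monomial g" "f \<in> ideal_span G" "m \<in> Poly_Mapping.keys f"
  shows "\<exists>b c. monom b \<in> G \<and> m = b + c"
proof -
  let ?T = "{f. \<forall>m\<in>Poly_Mapping.keys f. \<exists>b c. monom b \<in> G \<and> m = b + c}"
  have "is_ideal ?T"
    unfolding is_ideal_def
  proof (intro conjI ballI allI)
    show "0 \<in> ?T" by simp
    show "f + g \<in> ?T" if "f \<in> ?T" "g \<in> ?T" for f g
      using that keys_add[of f g] by blast
    show "s * f \<in> ?T" if f: "f \<in> ?T" for s f
    proof (rule CollectI, rule ballI)
      fix m assume "m \<in> Poly_Mapping.keys (s * f)"
      then obtain x y where xy: "m = x + y" "y \<in> Poly_Mapping.keys f"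
        using keys_mult[of s f] by blast
      then obtain b c where "monom b \<in> G" "y = b + c" using f by blast
      then show "\<exists>b c. monom b \<in> G \<and> m = b + c"
        using xy by (intro exI[of _ b] exI[of _ "c + x"]) (simp add: algebra_simps)
    qed
  qed
  moreover have "G \<subseteq> ?T"
  proof
    fix g assume g: "g \<in> G"
    then obtain b where "g = monom b" using assms(1) unfolding is_monomial_def by blast
    then show "g \<in> ?T" using g by (auto simp: monom_def)
  qed
  ultimately show ?thesis
    using ideal_span_least assms(2,3) by blast
qed

lemma graded_UNIV: "graded UNIV"
  by (simp add: graded_def)

lemma graded_monomial_ideal:
  fixes I :: "('n, 'k::field) S set"
  assumes "monomial_ideal I" shows "graded I"
  unfolding graded_def
proof (intro ballI allI)
  fix f m assume f: "f \<in> I"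
  obtain G where G: "\<forall>g\<in>G. is_monomial g" "I = ideal_span G"
    using assms unfolding monomial_ideal_def by blast
  show "Poly_Mapping.single m (Poly_Mapping.lookup f m) \<in> I"
  proof (cases "m \<in> Poly_Mapping.keys f")
    case False
    then show ?thesis using G(2) ideal_zero[OF is_ideal_ideal_span] by (simp add: in_keys_iff)
  next
    case True
    then obtain b c where bc: "monom b \<in> G" "m = b + c"
      using keys_ideal_span_monomials G f by blast
    then have "Poly_Mapping.single m (Poly_Mapping.lookup f m) = Poly_Mapping.single c (Poly_Mapping.lookup f m) * monom b"
      by (simp add: monom_def mult_single add.commute)
    moreover have "monom b \<in> I" using bc(1) G(2) ideal_span_superset by blast
    ultimately show ?thesis using G(2) is_ideal_ideal_span ideal_mult_left by metis
  qed
qed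

lemma homog_eq_single:
  fixes g :: "('n, 'k::field) S"
  assumes "homog d g" "m \<in> Poly_Mapping.keys g"
  shows "g = Poly_Mapping.single m (Poly_Mapping.lookup g m)"
proof (rule poly_mapping_eqI)
  fix k
  have "k = m" if "k \<in> Poly_Mapping.keys g"
  proof (rule poly_mapping_eqI)
    fix j
    have "(\<lambda>j. int (Poly_Mapping.lookup k j)) = (\<lambda>j. int (Poly_Mapping.lookup m j))"
      using assms that unfolding homog_def by auto
    then show "Poly_Mapping.lookup k j = Poly_Mapping.lookup m j"
      by (auto simp: fun_eq_iff)
  qed
  then show "Poly_Mapping.lookup g k = Poly_Mapping.lookup (Poly_Mapping.single m (Poly_Mapping.lookup g m)) k"
    by (cases "k = m") (auto simp: lookup_single_not_eq in_keys_iff)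
qed

lemma homog_mult_monom:
  fixes g :: "('n, 'k::field) S"
  assumes "homog d g"
  shows "homog (\<lambda>j. d j + int (Poly_Mapping.lookup a j)) (g * monom a)"
  unfolding homog_def
proof
  fix m assume "m \<in> Poly_Mapping.keys (g * monom a)"
  then obtain x where x: "m = x + a" "x \<in> Poly_Mapping.keys g"
    using keys_mult[of g "monom a"] by (auto simp: monom_def)
  then have "(\<lambda>j. int (Poly_Mapping.lookup x j)) = d"
    using assms unfolding homog_def by blast
  then show "(\<lambda>j. int (Poly_Mapping.lookup m j)) = (\<lambda>j. d j + int (Poly_Mapping.lookup a j))"
    using x(1) by (auto simp: fun_eq_iff lookup_add)
qed

lemma graded_isoD:
  assumes "graded_iso P a N N' \<phi>"
  shows "\<phi> h \<in> N" "h1 - h2 \<in> P \<longleftrightarrow> \<phi> h1 - \<phi> h2 \<in> N'" "y \<in> N \<Longrightarrow> \<exists>h. y - \<phi> h \<in> N'"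
    "\<phi> (h1 + h2) - (\<phi> h1 + \<phi> h2) \<in> N'" "\<phi> (s * h) - s * \<phi> h \<in> N'"
    "homog b h \<Longrightarrow> \<exists>g. homog (\<lambda>j. b j + a j) g \<and> \<phi> h - g \<in> N'"
  using assms unfolding graded_iso_def by blast+

lemma graded_iso_cyclic:
  fixes P N N' :: "('n, 'k::field) S set"
  assumes G: "graded_iso P a N N' \<phi>" and I': "is_ideal N'" and I: "is_ideal N" and "N' \<subseteq> N"
  shows "N = add_principal N' (\<phi> 1)" "colon N' (\<phi> 1) = P"
proof -
  have "- \<phi> 0 \<in> N'"
    using graded_isoD(4)[OF G, of 0 0] by simp
  then have phi0: "\<phi> 0 \<in> N'" using ideal_uminus[OF I'] by fastforce
  have lin: "\<phi> h - h * \<phi> 1 \<in> N'" for h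
    using graded_isoD(5)[OF G, of h 1] by simp
  show "N = add_principal N' (\<phi> 1)"
  proof
    show "N \<subseteq> add_principal N' (\<phi> 1)"
    proof
      fix y assume "y \<in> N"
      then obtain h where h: "y - \<phi> h \<in> N'" using graded_isoD(3)[OF G] by blast
      have "(y - \<phi> h) + (\<phi> h - h * \<phi> 1) \<in> N'" using h lin I' ideal_add by blast
      moreover have "y = ((y - \<phi> h) + (\<phi> h - h * \<phi> 1)) + h * \<phi> 1" by simp
      ultimately show "y \<in> add_principal N' (\<phi> 1)" unfolding add_principal_def by blast
    qed
    show "add_principal N' (\<phi> 1) \<subseteq> N"
      using add_principal_least[OF I assms(4)] graded_isoD(1)[OF G] by blast
  qed
  have "g * \<phi> 1 \<in> N' \<longleftrightarrow> g \<in> P" for g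
  proof -
    have "g * \<phi> 1 \<in> N' \<longleftrightarrow> \<phi> g \<in> N'"
      using ideal_mem_iff_if_diff_mem[OF I' lin[of g]] by simp
    also have "\<dots> \<longleftrightarrow> \<phi> g - \<phi> 0 \<in> N'"
      using ideal_mem_iff_if_diff_mem[OF I', of "\<phi> g" "\<phi> g - \<phi> 0"] phi0 by simp
    also have "\<dots> \<longleftrightarrow> g \<in> P"
      using graded_isoD(2)[OF G, of g 0] by simp
    finally show ?thesis .
  qed
  then show "colon N' (\<phi> 1) = P" by (auto simp: colon_def)
qed

text \<open>Homogeneity makes the generator a scalar multiple of a monomial.\<close>

lemma graded_iso_monomial_generator:
  fixes P N N' :: "('n, 'k::field) S set"
  assumes G: "graded_iso P a N N' \<phi>" and I': "is_ideal N'" and I: "is_ideal N" and "N' \<subseteq> N"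
    and P: "prime_ideal P"
  shows "\<exists>m. N = add_principal N' (monom m) \<and> colon N' (monom m) = P"
proof -
  note cyclic = graded_iso_cyclic[OF assms(1-4)]
  have "homog (\<lambda>j. 0) (1 :: ('n, 'k) S)" unfolding homog_def by simp
  then obtain g where g: "homog (\<lambda>j. 0 + a j) g" "\<phi> 1 - g \<in> N'"
    using graded_isoD(6)[OF G] by blast
  have "g \<noteq> 0"
    using g(2) cyclic(2) notin_if_prime_colon P by fastforce
  then obtain m where m: "m \<in> Poly_Mapping.keys g" by fastforce
  define c where "c = Poly_Mapping.lookup g m"
  have "c \<noteq> 0" using m unfolding c_def by (simp add: in_keys_iff)
  then have unit: "Poly_Mapping.single 0 c * Poly_Mapping.single 0 (inverse c) = (1 :: ('n, 'k) S)"
    by (simp add: mult_single)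
  have "g = Poly_Mapping.single 0 c * monom m"
    using homog_eq_single[OF g(1) m] unfolding c_def monom_def by (simp add: mult_single)
  then have "N = add_principal N' (monom m)" "colon N' (monom m) = P"
    using cyclic add_principal_cong[OF I' g(2)] add_principal_mult_unit[OF unit]
      colon_cong[OF I' g(2)] colon_mult_unit[OF I' unit] by simp_all
  then show ?thesis by blast
qed

section \<open>Clean chains\<close>

definition clean_chain ::
  "nat \<Rightarrow> (nat \<Rightarrow> ('n, 'k::field) S set) \<Rightarrow> (nat \<Rightarrow> ('n, 'k) S set) \<Rightarrow> (nat \<Rightarrow> 'n \<Rightarrow> int) \<Rightarrow> bool" where
  "clean_chain r N P a \<longleftrightarrow> (\<forall>i\<le>r. is_ideal (N i) \<and> graded (N i)) \<and>
     (\<forall>i<r. N i \<subset> N (Suc i) \<and> monomial_prime (P i) \<and>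
       (\<exists>\<phi>. graded_iso (P i) (a i) (N (Suc i)) (N i) \<phi>))"

lemma clean_quot_iff:
  "clean_quot I \<longleftrightarrow>
     (\<exists>r N P a. N 0 = I \<and> N r = UNIV \<and> clean_chain r N P a \<and> (\<forall>i<r. P i \<in> minprimes I))"
  unfolding clean_quot_def clean_chain_def by (intro ex_cong1; fastforce)

lemma clean_chain_mono: "clean_chain r N P a \<Longrightarrow> i \<le> j \<Longrightarrow> j \<le> r \<Longrightarrow> N i \<subseteq> N j"
  by (rule subset_chain_mono) (auto simp: clean_chain_def)

lemma clean_chain_prime_filtration:
  assumes C: "clean_chain r N P a" and "N r = UNIV"
  shows "\<exists>M. prime_filtration r N P (\<lambda>i. monom (M i))"
proof -
  have "\<exists>m. N (Suc i) = add_principal (N i) (monom m) \<and> colon (N i) (monom m) = P i" if "i < r" for i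
  proof -
    from C that have step: "\<exists>\<phi>. graded_iso (P i) (a i) (N (Suc i)) (N i) \<phi>"
      "is_ideal (N i)" "is_ideal (N (Suc i))" "N i \<subseteq> N (Suc i)" "prime_ideal (P i)"
      unfolding clean_chain_def monomial_prime_def by auto
    then obtain \<phi> where "graded_iso (P i) (a i) (N (Suc i)) (N i) \<phi>" by blast
    then show ?thesis using graded_iso_monomial_generator step(2-5) by blast
  qed
  then have "\<forall>i. \<exists>m. i < r \<longrightarrow> N (Suc i) = add_principal (N i) (monom m) \<and> colon (N i) (monom m) = P i"
    by blast
  then obtain M where M: "\<forall>i<r. N (Suc i) = add_principal (N i) (monom (M i)) \<and> colon (N i) (monom (M i)) = P i"
    by (metis choice)
  have "\<forall>i\<le>r. is_ideal (N i)" "\<forall>i<r. prime_ideal (P i)"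
    using C by (simp_all add: clean_chain_def monomial_prime_def)
  then have "prime_filtration r N P (\<lambda>i. monom (M i))"
    unfolding prime_filtration_def using M assms(2) by simp
  then show ?thesis by blast
qed

lemma minprimes_subset_Ass_if_clean_quot:
  assumes "clean_quot I" shows "minprimes I \<subseteq> Ass I"
proof -
  obtain r N P a where N: "N 0 = I" "N r = UNIV" "clean_chain r N P a"
    using assms unfolding clean_quot_iff by blast
  then obtain M where "prime_filtration r N P (\<lambda>i. monom (M i))"
    using clean_chain_prime_filtration by blast
  then show ?thesis
    using minprimes_subset_Ass_if_prime_filtration N(1) by blast
qed

definition chain_append :: "nat \<Rightarrow> (nat \<Rightarrow> 'a) \<Rightarrow> (nat \<Rightarrow> 'a) \<Rightarrow> nat \<Rightarrow> 'a" where
  "chain_append r f g i = (if i < r then f i else g (i - r))"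

lemma clean_chain_append:
  assumes C1: "clean_chain r1 N1 P1 a1" and C2: "clean_chain r2 N2 P2 a2" and "N1 r1 = N2 0"
  shows "clean_chain (r1 + r2) (chain_append r1 N1 N2) (chain_append r1 P1 P2) (chain_append r1 a1 a2)"
proof -
  have N: "chain_append r1 N1 N2 i = (if i \<le> r1 then N1 i else N2 (i - r1))" for i
    using assms(3) by (simp add: chain_append_def)
  show ?thesis
    unfolding clean_chain_def
  proof (intro conjI allI impI)
    fix i assume "i \<le> r1 + r2"
    then show "is_ideal (chain_append r1 N1 N2 i)" "graded (chain_append r1 N1 N2 i)"
      using C1 C2 unfolding N clean_chain_def by auto
  next
    fix i assume i: "i < r1 + r2"
    have "chain_append r1 N1 N2 i \<subset> chain_append r1 N1 N2 (Suc i) \<and>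
      monomial_prime (chain_append r1 P1 P2 i) \<and>
      (\<exists>\<phi>. graded_iso (chain_append r1 P1 P2 i) (chain_append r1 a1 a2 i)
         (chain_append r1 N1 N2 (Suc i)) (chain_append r1 N1 N2 i) \<phi>)"
    proof (cases "i < r1")
      case True
      then show ?thesis using C1 unfolding N clean_chain_def by (simp add: chain_append_def)
    next
      case False
      then have "i - r1 < r2" "Suc i - r1 = Suc (i - r1)" using i by auto
      then show ?thesis using C2 False unfolding clean_chain_def by (simp add: chain_append_def)
    qed
    then show "chain_append r1 N1 N2 i \<subset> chain_append r1 N1 N2 (Suc i)"
      "monomial_prime (chain_append r1 P1 P2 i)"
      "\<exists>\<phi>. graded_iso (chain_append r1 P1 P2 i) (chain_append r1 a1 a2 i)
         (chain_append r1 N1 N2 (Suc i)) (chain_append r1 N1 N2 i) \<phi>"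
      by blast+
  qed
qed

text \<open>\<open>I + u J\<close>. For \<open>I : u \<subseteq> J \<subseteq> J'\<close>, multiplication by \<open>u\<close> induces
  \<open>J'/J \<cong> (I + u J')/(I + u J)\<close>.\<close>

definition ideal_lift :: "'r::comm_ring_1 set \<Rightarrow> 'r \<Rightarrow> 'r set \<Rightarrow> 'r set" where
  "ideal_lift I u J = {x + g * u | x g. x \<in> I \<and> g \<in> J}"

lemma ideal_lift_memI: "x \<in> I \<Longrightarrow> g \<in> J \<Longrightarrow> x + g * u \<in> ideal_lift I u J"
  unfolding ideal_lift_def by blast

lemma ideal_lift_memE:
  assumes "y \<in> ideal_lift I u J"
  obtains x g where "y = x + g * u" "x \<in> I" "g \<in> J"
  using assms unfolding ideal_lift_def by blast

lemma is_ideal_ideal_lift: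
  assumes I: "is_ideal I" and J: "is_ideal J" shows "is_ideal (ideal_lift I u J)"
  unfolding is_ideal_def
proof (intro conjI ballI allI)
  show "0 \<in> ideal_lift I u J"
    using ideal_lift_memI[OF ideal_zero[OF I] ideal_zero[OF J]] by simp
  fix y z assume "y \<in> ideal_lift I u J" "z \<in> ideal_lift I u J"
  then obtain x g x' g' where "y = x + g * u" "z = x' + g' * u" "x \<in> I" "x' \<in> I" "g \<in> J" "g' \<in> J"
    by (metis ideal_lift_memE)
  moreover have "(x + g * u) + (x' + g' * u) = (x + x') + (g + g') * u"
    by (simp add: algebra_simps)
  ultimately show "y + z \<in> ideal_lift I u J"
    using ideal_lift_memI ideal_add[OF I] ideal_add[OF J] by metis
next
  fix s y assume "y \<in> ideal_lift I u J"
  then obtain x g where "y = x + g * u" "x \<in> I" "g \<in> J" by (rule ideal_lift_memE)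
  moreover have "s * (x + g * u) = s * x + (s * g) * u"
    by (simp add: algebra_simps)
  ultimately show "s * y \<in> ideal_lift I u J"
    using ideal_lift_memI ideal_mult_left[OF I] ideal_mult_left[OF J] by metis
qed

lemma ideal_lift_colon:
  assumes I: "is_ideal I" shows "ideal_lift I u (colon I u) = I"
proof
  show "ideal_lift I u (colon I u) \<subseteq> I"
    using ideal_add[OF I] by (auto elim!: ideal_lift_memE simp: colon_def)
  show "I \<subseteq> ideal_lift I u (colon I u)"
    using ideal_lift_memI[of _ I 0 "colon I u" u] ideal_zero[OF I] by (auto simp: colon_def)
qed

lemma ideal_lift_UNIV: "ideal_lift I u UNIV = add_principal I u"
  unfolding ideal_lift_def add_principal_def by blast

lemma mult_mem_ideal_lift_iff:
  assumes I: "is_ideal I" and J: "is_ideal J" and "colon I u \<subseteq> J"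
  shows "d * u \<in> ideal_lift I u J \<longleftrightarrow> d \<in> J"
proof
  assume "d * u \<in> ideal_lift I u J"
  then obtain x g where xg: "d * u = x + g * u" "x \<in> I" "g \<in> J" unfolding ideal_lift_def by blast
  then have "(d - g) * u \<in> I" by (simp add: algebra_simps)
  then have "d - g \<in> J" using assms(3) unfolding colon_def by blast
  then show "d \<in> J" using ideal_mem_iff_if_diff_mem[OF J] xg(3) by blast
next
  assume "d \<in> J"
  then show "d * u \<in> ideal_lift I u J"
    unfolding ideal_lift_def using ideal_zero[OF I] by (intro CollectI exI[of _ 0] exI[of _ d]) simp
qed

lemma ideal_lift_strict_mono:
  assumes "is_ideal I" "is_ideal J" "colon I u \<subseteq> J" "J \<subset> J'"
  shows "ideal_lift I u J \<subset> ideal_lift I u J'"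
proof -
  obtain g where g: "g \<in> J'" "g \<notin> J" using assms(4) by blast
  have "ideal_lift I u J \<subseteq> ideal_lift I u J'"
    using assms(4) unfolding ideal_lift_def by blast
  moreover have "g * u \<in> ideal_lift I u J'"
    unfolding ideal_lift_def using ideal_zero[OF assms(1)] g(1)
    by (intro CollectI exI[of _ 0] exI[of _ g]) simp
  moreover have "g * u \<notin> ideal_lift I u J"
    using mult_mem_ideal_lift_iff[OF assms(1-3)] g(2) by blast
  ultimately show ?thesis by blast
qed

lemma graded_ideal_lift:
  fixes I J :: "('n, 'k::field) S set"
  assumes J: "is_ideal J" and gI: "graded I" and gJ: "graded J"
  shows "graded (ideal_lift I (monom a) J)"
  unfolding graded_def
proof (intro ballI allI)
  fix f m assume "f \<in> ideal_lift I (monom a) J"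
  then obtain x g where f: "f = x + g * monom a" "x \<in> I" "g \<in> J" unfolding ideal_lift_def by blast
  have x: "Poly_Mapping.single m (Poly_Mapping.lookup x m) \<in> I"
    using gI f(2) unfolding graded_def by blast
  obtain g' where g': "g' \<in> J" "Poly_Mapping.single m (Poly_Mapping.lookup (g * monom a) m) = g' * monom a"
  proof (cases "\<exists>k. m = k + a")
    case True
    then obtain k where "m = k + a" by blast
    then have "Poly_Mapping.single m (Poly_Mapping.lookup (g * monom a) m) =
        Poly_Mapping.single k (Poly_Mapping.lookup g k) * monom a"
      by (simp add: lookup_mult_monom_add) (simp add: monom_def mult_single)
    moreover have "Poly_Mapping.single k (Poly_Mapping.lookup g k) \<in> J"
      using gJ f(3) unfolding graded_def by blast
    ultimately show ?thesis using that by blast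
  next
    case False
    then have "Poly_Mapping.lookup (g * monom a) m = 0"
      using lookup_mult_monom_eq_zero by blast
    then show ?thesis using that[of 0] ideal_zero[OF J] by simp
  qed
  have "Poly_Mapping.single m (Poly_Mapping.lookup f m) =
      Poly_Mapping.single m (Poly_Mapping.lookup x m) + g' * monom a"
    using f(1) g'(2) by (simp add: lookup_add single_add)
  then show "Poly_Mapping.single m (Poly_Mapping.lookup f m) \<in> ideal_lift I (monom a) J"
    unfolding ideal_lift_def using x g'(1) by blast
qed

lemma graded_iso_ideal_lift:
  fixes I J J' P :: "('n, 'k::field) S set"
  assumes G: "graded_iso P b J' J \<phi>" and I: "is_ideal I" and J: "is_ideal J"
    and C: "colon I (monom a) \<subseteq> J"
  shows "graded_iso P (\<lambda>j. b j + int (Poly_Mapping.lookup a j))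
           (ideal_lift I (monom a) J') (ideal_lift I (monom a) J) (\<lambda>h. \<phi> h * monom a)"
proof -
  let ?u = "monom a :: ('n, 'k) S"
  have mem: "d * ?u \<in> ideal_lift I ?u J \<longleftrightarrow> d \<in> J" for d
    using mult_mem_ideal_lift_iff[OF I J C] .
  have "\<phi> h * ?u \<in> ideal_lift I ?u J'" for h
    unfolding ideal_lift_def using ideal_zero[OF I] graded_isoD(1)[OF G]
    by (intro CollectI exI[of _ 0] exI[of _ "\<phi> h"]) simp
  moreover have "y \<in> ideal_lift I ?u J' \<Longrightarrow> \<exists>h. y - \<phi> h * ?u \<in> ideal_lift I ?u J" for y
  proof -
    assume "y \<in> ideal_lift I ?u J'"
    then obtain x g where xg: "y = x + g * ?u" "x \<in> I" "g \<in> J'" unfolding ideal_lift_def by blast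
    then obtain h where "g - \<phi> h \<in> J" using graded_isoD(3)[OF G] by blast
    moreover have "y - \<phi> h * ?u = x + (g - \<phi> h) * ?u" using xg(1) by (simp add: algebra_simps)
    ultimately show ?thesis unfolding ideal_lift_def using xg(2) by blast
  qed
  moreover have "homog b' h \<Longrightarrow> \<exists>g. homog (\<lambda>j. b' j + (b j + int (Poly_Mapping.lookup a j))) g \<and>
      \<phi> h * ?u - g \<in> ideal_lift I ?u J" for b' h
  proof -
    assume "homog b' h"
    then obtain g where g: "homog (\<lambda>j. b' j + b j) g" "\<phi> h - g \<in> J"
      using graded_isoD(6)[OF G] by blast
    have "homog (\<lambda>j. b' j + (b j + int (Poly_Mapping.lookup a j))) (g * ?u)"
      using homog_mult_monom[OF g(1)] by (simp add: add.assoc)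
    moreover have "\<phi> h * ?u - g * ?u \<in> ideal_lift I ?u J"
      using mem g(2) by (simp flip: left_diff_distrib)
    ultimately show ?thesis by blast
  qed
  moreover have "\<phi> h1 * ?u - \<phi> h2 * ?u = (\<phi> h1 - \<phi> h2) * ?u" for h1 h2
    by (simp add: algebra_simps)
  moreover have "\<phi> (h1 + h2) * ?u - (\<phi> h1 * ?u + \<phi> h2 * ?u) = (\<phi> (h1 + h2) - (\<phi> h1 + \<phi> h2)) * ?u"
    for h1 h2 by (simp add: algebra_simps)
  moreover have "\<phi> (s * h) * ?u - s * (\<phi> h * ?u) = (\<phi> (s * h) - s * \<phi> h) * ?u" for s h
    by (simp add: algebra_simps)
  ultimately show ?thesis
    unfolding graded_iso_def using graded_isoD(2,4,5)[OF G] mem by simp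
qed

lemma clean_chain_ideal_lift:
  fixes I :: "('n, 'k::field) S set"
  assumes C: "clean_chain r N P b" and I: "is_ideal I" "graded I" and "colon I (monom a) \<subseteq> N 0"
  shows "clean_chain r (\<lambda>i. ideal_lift I (monom a) (N i)) P (\<lambda>i j. b i j + int (Poly_Mapping.lookup a j))"
proof -
  have N: "is_ideal (N i)" "graded (N i)" "colon I (monom a) \<subseteq> N i" if "i \<le> r" for i
    using C that assms(4) clean_chain_mono[OF C, of 0 i] unfolding clean_chain_def by auto
  show ?thesis
    unfolding clean_chain_def
  proof (intro conjI allI impI)
    fix i assume "i \<le> r"
    then show "is_ideal (ideal_lift I (monom a) (N i))" "graded (ideal_lift I (monom a) (N i))"
      using N I by (simp_all add: is_ideal_ideal_lift graded_ideal_lift)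
  next
    fix i assume i: "i < r"
    then have step: "N i \<subset> N (Suc i)" "monomial_prime (P i)"
      "\<exists>\<phi>. graded_iso (P i) (b i) (N (Suc i)) (N i) \<phi>"
      using C by (simp_all add: clean_chain_def)
    then obtain \<phi> where \<phi>: "graded_iso (P i) (b i) (N (Suc i)) (N i) \<phi>" by blast
    have Ni: "is_ideal (N i)" "colon I (monom a) \<subseteq> N i" using N i by simp_all
    show "ideal_lift I (monom a) (N i) \<subset> ideal_lift I (monom a) (N (Suc i))"
      using ideal_lift_strict_mono[OF I(1) Ni step(1)] .
    show "monomial_prime (P i)" using step(2) .
    show "\<exists>\<phi>. graded_iso (P i) (\<lambda>j. b i j + int (Poly_Mapping.lookup a j))
        (ideal_lift I (monom a) (N (Suc i))) (ideal_lift I (monom a) (N i)) \<phi>"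
      using graded_iso_ideal_lift[OF \<phi> I(1) Ni] by blast
  qed
qed

section \<open>Clean quotients and \<open>k\<close>-clean ideals\<close>

lemma clean_quot_if_prime:
  fixes I :: "('n, 'k::field) S set"
  assumes m: "monomial_ideal I" and p: "prime_ideal I"
  shows "clean_quot I"
proof -
  define N where "N i = (if i = 0 then I else UNIV)" for i :: nat
  have I: "is_ideal I" "graded I" "I \<noteq> UNIV"
    using m p monomial_ideal_is_ideal graded_monomial_ideal prime_ideal_def by blast+
  have "graded_iso I (\<lambda>_. 0) UNIV I id"
    unfolding graded_iso_def using ideal_zero[OF I(1)] by auto (metis diff_self)
  moreover have "\<forall>i\<le>1. is_ideal (N i) \<and> graded (N i)"
    using I is_ideal_UNIV graded_UNIV by (auto simp: N_def le_Suc_eq)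
  moreover have "N 0 \<subset> N 1" "monomial_prime I"
    using I(3) m p by (auto simp: N_def monomial_prime_def)
  ultimately have "clean_chain 1 N (\<lambda>_. I) (\<lambda>_ _. 0)"
    unfolding clean_chain_def by (simp add: N_def) blast
  moreover have "I \<in> minprimes I"
    using p unfolding minprimes_def by blast
  ultimately show ?thesis
    unfolding clean_quot_iff
    by (intro exI[of _ 1] exI[of _ N] exI[of _ "\<lambda>_. I"] exI[of _ "\<lambda>_ _. 0"]) (simp add: N_def)
qed

lemma clean_quot_if_kclean: "kclean k I \<Longrightarrow> clean_quot I"
proof (induction rule: kclean.induct)
  case (prime I)
  then show ?case using clean_quot_if_prime by blast
next
  case (step I a)
  let ?u = "monom a"
  have I: "is_ideal I" "graded I"
    using step.hyps(1) monomial_ideal_is_ideal graded_monomial_ideal by blast+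
  obtain r1 N1 P1 a1 where C1: "N1 0 = colon I ?u" "N1 r1 = UNIV" "clean_chain r1 N1 P1 a1"
    "\<forall>i<r1. P1 i \<in> minprimes (colon I ?u)"
    using step.IH(1) unfolding clean_quot_iff by blast
  obtain r2 N2 P2 a2 where C2: "N2 0 = add_principal I ?u" "N2 r2 = UNIV" "clean_chain r2 N2 P2 a2"
    "\<forall>i<r2. P2 i \<in> minprimes (add_principal I ?u)"
    using step.IH(2) unfolding clean_quot_iff by blast
  define L where "L i = ideal_lift I ?u (N1 i)" for i
  define a' where "a' i j = a1 i j + int (Poly_Mapping.lookup a j)" for i j
  have "clean_chain r1 L P1 a'"
    unfolding L_def a'_def using clean_chain_ideal_lift[OF C1(3) I] C1(1) by simp
  moreover have L: "L 0 = I" "L r1 = N2 0"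
    unfolding L_def using C1(1,2) C2(1) ideal_lift_colon[OF I(1)] ideal_lift_UNIV by simp_all
  ultimately have chain: "clean_chain (r1 + r2) (chain_append r1 L N2) (chain_append r1 P1 P2) (chain_append r1 a' a2)"
    using clean_chain_append C2(3) by blast
  have ends: "chain_append r1 L N2 0 = I" "chain_append r1 L N2 (r1 + r2) = UNIV"
    using L C2(2) by (auto simp: chain_append_def)
  have "minprimes (colon I ?u) \<subseteq> minprimes I"
    using minprimes_subset_Ass_if_clean_quot[OF step.IH(1)] Ass_colon_subset step.hyps(3) by blast
  then have "\<forall>i<r1 + r2. chain_append r1 P1 P2 i \<in> minprimes I"
    using C1(4) C2(4) step.hyps(4) by (auto simp: chain_append_def cleaner_monomial_def)
  with chain ends show ?case
    unfolding clean_quot_iff by blast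
qed

lemma cleaner_monomial_of_prime_filtration:
  assumes F: "prime_filtration (Suc r) N P (\<lambda>i. monom (M i))" and "0 < r"
    and min: "\<forall>i<Suc r. P i \<in> minprimes (N 0)"
  shows "cleaner_monomial (N 0) (M 0)"
proof -
  note F' = prime_filtration_tail[OF F]
  have N1: "N 1 = add_principal (N 0) (monom (M 0))" "N 1 \<noteq> UNIV"
    using prime_filtrationD(3)[OF F, of 0] prime_filtration_proper[OF F, of 1] assms(2) by simp_all
  have "M 0 \<noteq> 0"
  proof
    assume "M 0 = 0"
    then have "monom (M 0) = 1" by (simp add: monom_def)
    then have "1 \<in> N 1"
      using N1(1) self_mem_add_principal[OF prime_filtrationD(1)[OF F zero_less_Suc], of "monom (M 0)"] by metis
    then show False
      using N1(2) ideal_eq_UNIV_if_one[OF prime_filtrationD(1)[OF F, of 1]] assms(2) by simp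
  qed
  moreover have "monom (M 0) \<notin> N 0"
    using notin_if_prime_colon[of "N 0" "monom (M 0)"] prime_filtrationD(2,4)[OF F, of 0] by simp
  moreover have "minprimes (N 1) \<subseteq> minprimes (N 0)"
  proof
    fix Q assume "Q \<in> minprimes (N 1)"
    then obtain j where "j < r" "P (Suc j) = Q"
      using minprimes_in_prime_filtration[OF F'] by auto
    then show "Q \<in> minprimes (N 0)" using min by auto
  qed
  ultimately show ?thesis
    unfolding cleaner_monomial_def N1(1) by blast
qed

text \<open>The support bound \<open>|supp(u)| \<le> k + 1\<close> is never binding for \<open>k = n\<close>.\<close>

lemma kclean_if_prime_filtration:
  fixes N :: "nat \<Rightarrow> ('n::finite, 'k::field) S set"
  assumes "prime_filtration r N P (\<lambda>i. monom (M i))" "monomial_ideal (N 0)" "N 0 \<noteq> UNIV"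
    "\<forall>i<r. monomial_prime (P i) \<and> P i \<in> minprimes (N 0)"
  shows "kclean (card (UNIV :: 'n set)) (N 0)"
  using assms
proof (induction r arbitrary: N P M)
  case 0
  then show ?case by (simp add: prime_filtration_def)
next
  case (Suc r)
  note F = Suc.prems(1)
  note N0 = prime_filtrationD[OF F zero_less_Suc]
  have "kclean (card (UNIV :: 'n set)) (P 0)"
    using Suc.prems(4) by (intro kclean.prime) (auto simp: monomial_prime_def prime_ideal_def)
  then have colon: "kclean (card (UNIV :: 'n set)) (colon (N 0) (monom (M 0)))"
    using N0(4) by simp
  show ?case
  proof (cases "r = 0")
    case True
    then have "add_principal (N 0) (monom (M 0)) = UNIV"
      using F N0(3) by (simp add: prime_filtration_def)
    then show ?thesis
      using colon colon_eq_if_add_principal_UNIV[OF N0(1)] by simp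
  next
    case False
    note F' = prime_filtration_tail[OF F]
    have "N 0 \<subseteq> N 1" using prime_filtration_mono[OF F, of 0 1] by simp
    then have "P (Suc i) \<in> minprimes (N 1)" if "i < r" for i
      using minprimes_of_intermediate[of "P (Suc i)" "N 0" "N 1"] prime_filtration_subset_prime[OF F' that]
        Suc.prems(4) that by simp
    moreover have "monomial_ideal (N 1)" "N 1 \<noteq> UNIV"
      using N0(3) monomial_ideal_add_principal[OF Suc.prems(2)] prime_filtration_proper[OF F, of 1] False
      by simp_all
    ultimately have "kclean (card (UNIV :: 'n set)) (N 1)"
      using Suc.IH[OF F'] Suc.prems(4) by simp
    then have add: "kclean (card (UNIV :: 'n set)) (add_principal (N 0) (monom (M 0)))"
      using N0(3) by simp
    have "Ass (N 0) = minprimes (N 0)"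
      using Ass_eq_minprimes_if_prime_filtration[OF F] Suc.prems(4) by blast
    moreover have "cleaner_monomial (N 0) (M 0)"
      using cleaner_monomial_of_prime_filtration[OF F] False Suc.prems(4) by blast
    moreover have "card (supp (M 0)) \<le> card (UNIV :: 'n set) + 1"
      using card_mono[of UNIV "supp (M 0)"] by simp
    ultimately show ?thesis
      using kclean.step[OF Suc.prems(2,3)] colon add by blast
  qed
qed

lemma kclean_if_clean_quot:
  fixes I :: "(('n::finite \<Rightarrow>\<^sub>0 nat) \<Rightarrow>\<^sub>0 'k::field) set"
  assumes "monomial_ideal I" "I \<noteq> UNIV" "clean_quot I"
  shows "kclean (card (UNIV :: 'n set)) I"
proof -
  obtain r N P a where N: "N 0 = I" "N r = UNIV" "clean_chain r N P a" "\<forall>i<r. P i \<in> minprimes I"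
    using assms(3) unfolding clean_quot_iff by blast
  then obtain M where "prime_filtration r N P (\<lambda>i. monom (M i))"
    using clean_chain_prime_filtration by blast
  moreover have "\<forall>i<r. monomial_prime (P i)"
    using N(3) by (simp add: clean_chain_def)
  ultimately show ?thesis
    using kclean_if_prime_filtration assms(1,2) N(1,4) by blast
qed

theorem theorem2p4:
  fixes I :: "(('n::finite \<Rightarrow>\<^sub>0 nat) \<Rightarrow>\<^sub>0 'k::field) set"
  assumes "monomial_ideal I" and "I \<noteq> UNIV"
  shows "((\<exists>k. kclean k I) \<longrightarrow> clean_quot I) \<and> (clean_quot I \<longrightarrow> (\<exists>k. kclean k I))"
  using clean_quot_if_kclean kclean_if_clean_quot[OF assms] by blast

end
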